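(* Let $n\ge 1$ and, for $i=1,\ldots,n$, let $m_i\ge 1$ and $p_i\ge 1$ be integers. Assume: (C1) For every $i$, $k_i:[0,1]\times[0,1]\to[0,+\infty)$ is measurable and continuous in $t$ for almost every $s$, and there is $\Phi_{i0}\in L^1(0,1)$ with $0\le k_i(t,s)\le \Phi_{i0}(s)$ for $t\in[0,1]$ and a.e. $s\in[0,1]$. (C2) For every $i$ and every integer $l$ with $1\le l<m_i$, $\frac{\partial^{l}k_i}{\partial t^{l}}$ is measurable and continuous in $t$ for a.e. $s$, and there is $\Phi_{il}\in L^1(0,1)$ with $\bigl|\frac{\partial^{l}k_i}{\partial t^{l}}(t,s)\bigr|\le\Phi_{il}(s)$ for $t\in[0,1]$ and a.e. $s$. (C3) For every $i$, $\frac{\partial^{m_i}k_i}{\partial t^{m_i}}$ is measurable and continuous in $t$ except possibly at $t=s$, where there may be a jump discontinuity, and there is $\Phi_{im_i}\in L^1(0,1)$ with $\bigl|\frac{\partial^{m_i}k_i}{\partial t^{m_i}}(t,s)\bigr|\le\Phi_{im_i}(s)$ for $t\in[0,1]$ and a.e. $s$. (C4) For every $i$, $f_i:[0,1]\times\prod_{q=1}^{n}\bigl([0,+\infty)\times\mathbb{R}^{m_q}\bigr)\to[0,+\infty)$ is continuous; its arguments are written $(t,x_{10},\ldots,x_{1m_1},\ldots,x_{n0},\ldots,x_{nm_n})$ with $x_{q0}\ge0$. (C5) For every $i$ and $j=1,\ldots,p_i$, $\gamma_{ij}\in C^{m_i}[0,1]$ and $\gamma_{ij}\ge0$ on $[0,1]$.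 (C6) For every $i,j$, $\lambda_i,\eta_{ij}\in[0,+\infty)$. (C7) For every $i$, the spectral radius of $L_iw(t)=\int_0^1k_i(t,s)w(s)\,ds$ on $C[0,1]$ is positive. (C8) For every $i,j$, $h_{ij}:P\to[0,+\infty)$ is continuous and maps bounded sets into bounded sets. Assume further that there exist $\tau_i,\xi_{ij}\in(0,+\infty)$ ($i=1,\ldots,n$, $j=1,\ldots,p_i$) such that $$0\le f_i(t,x_{10},\ldots,x_{1m_1},\ldots,x_{n0},\ldots,x_{nm_n})\le\tau_i\,x_{i0}\ \text{ on } [0,1]\times\prod_{q=1}^n\bigl([0,+\infty)\times\mathbb{R}^{m_q}\bigr),$$ $$h_{ij}[u]\le\xi_{ij}\|u_i\|_\infty\ \text{ for every } u\in P,\ i=1,\ldots,n,\ j=1,\ldots,p_i,$$ $$\max_{i=1,\ldots,n}\Bigl\{\lambda_i\tau_iK_{i0}+\sum_{j=1}^{p_i}\eta_{ij}\xi_{ij}\|\gamma_{ij}\|_\infty\Bigr\}<1.$$ Then the system $$u_i(t)=\lambda_i\int_0^1k_i(t,s)f_i\bigl(s,u_1(s),\ldots,u_1^{(m_1)}(s),\ldots,u_n(s),\ldots,u_n^{(m_n)}(s)\bigr)\,ds+\sum_{j=1}^{p_i}\eta_{ij}\gamma_{ij}(t)h_{ij}[u],\quad t\in[0,1],\ i=1,\ldots,n,$$ with $u=(u_1,\ldots,u_n)$, has at most the zero solution in $P$.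
   Context: $\|w\|_\infty=\max_{t\in[0,1]}|w(t)|$. The cone is $P=\{u\in\prod_{i=1}^nC^{m_i}[0,1]: u_i(t)\ge0 \text{ for all } t\in[0,1],\ i=1,\ldots,n\}$, where $\prod_{i=1}^nC^{m_i}[0,1]$ carries the norm $\|u\|=\max_i\max_{0\le j\le m_i}\|u_i^{(j)}\|_\infty$. $K_{i0}=\sup_{t\in[0,1]}\int_0^1k_i(t,s)\,ds$. *)

theory Defs
  imports "HOL-Analysis.Analysis"
begin

fun dern :: "nat \<Rightarrow> (real \<Rightarrow> real) \<Rightarrow> real \<Rightarrow> real" where
  "dern 0 w = w"
| "dern (Suc j) w = (\<lambda>t. vector_derivative (dern j w) (at t within {0..1}))"

definition Cm :: "nat \<Rightarrow> (real \<Rightarrow> real) \<Rightarrow> bool" where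
  "Cm m w \<longleftrightarrow>
     (\<forall>j<m. \<forall>t\<in>{0..1}. (dern j w has_vector_derivative dern (Suc j) w t) (at t within {0..1}))
     \<and> continuous_on {0..1} (dern m w)"

definition supn :: "(real \<Rightarrow> real) \<Rightarrow> real" where
  "supn w = (SUP t\<in>{0..1}. \<bar>w t\<bar>)"

definition coneP :: "nat \<Rightarrow> (nat \<Rightarrow> nat) \<Rightarrow> (nat \<Rightarrow> real \<Rightarrow> real) set" where
  "coneP n m = {u. \<forall>i<n. Cm (m i) (u i) \<and> (\<forall>t\<in>{0..1}. u i t \<ge> 0)}"

definition normP :: "nat \<Rightarrow> (nat \<Rightarrow> nat) \<Rightarrow> (nat \<Rightarrow> real \<Rightarrow> real) \<Rightarrow> real" where
  "normP n m u = Max ((\<lambda>(i, j). supn (dern j (u i))) ` (SIGMA i:{..<n}. {..m i}))"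

definition K0 :: "(real \<Rightarrow> real \<Rightarrow> real) \<Rightarrow> real" where
  "K0 k = (SUP t\<in>{0..1}. integral\<^sup>L (lebesgue_on {0..1}) (\<lambda>s. k t s))"

definition intop :: "(real \<Rightarrow> real \<Rightarrow> real) \<Rightarrow> (real \<Rightarrow> complex) \<Rightarrow> real \<Rightarrow> complex" where
  "intop k w = (\<lambda>t. integral\<^sup>L (lebesgue_on {0..1}) (\<lambda>s. complex_of_real (k t s) * w s))"

text \<open>Spectrum of L on C([0,1];C): mu such that mu I - L is not bijective on C[0,1]
  (functions identified when they agree on [0,1]).\<close>
definition spectrumC01 :: "(real \<Rightarrow> real \<Rightarrow> real) \<Rightarrow> complex set" where
  "spectrumC01 k = {\<mu>. \<not> (
      (\<forall>w. continuous_on {0..1} w \<longrightarrow> (\<forall>t\<in>{0..1}. \<mu> * w t - intop k w t = 0)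
            \<longrightarrow> (\<forall>t\<in>{0..1}. w t = 0))
    \<and> (\<forall>g. continuous_on {0..1} g \<longrightarrow>
          (\<exists>w. continuous_on {0..1} w \<and> (\<forall>t\<in>{0..1}. \<mu> * w t - intop k w t = g t))))}"

definition spectral_radiusC01 :: "(real \<Rightarrow> real \<Rightarrow> real) \<Rightarrow> real" where
  "spectral_radiusC01 k = Sup (cmod ` spectrumC01 k)"

end

theory Submission
  imports Defs
begin

text \<open>
  The growth bounds give, for each component, \<open>u\<^sub>i(t) \<le> c\<^sub>i \<parallel>u\<^sub>i\<parallel>\<^sub>\<infinity>\<close> on \<open>[0,1]\<close>,
  where \<open>c\<^sub>i = \<lambda>\<^sub>i\<tau>\<^sub>iK\<^sub>i\<^sub>0 + \<Sigma>\<^sub>j \<eta>\<^sub>i\<^sub>j\<xi>\<^sub>i\<^sub>j\<parallel>\<gamma>\<^sub>i\<^sub>j\<parallel>\<^sub>\<infinity> < 1\<close>; since \<open>u\<^sub>i \<ge> 0\<close>, taking the supremum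
  yields \<open>\<parallel>u\<^sub>i\<parallel>\<^sub>\<infinity> \<le> c\<^sub>i \<parallel>u\<^sub>i\<parallel>\<^sub>\<infinity>\<close>, so \<open>u\<^sub>i = 0\<close>. As \<open>k\<^sub>i\<close> is only jointly Lebesgue
  measurable, its sections \<open>k\<^sub>i(t,\<cdot>)\<close> are measurable merely for almost every \<open>t\<close>; the
  pointwise estimate is therefore first proved almost everywhere and then extended to
  all of \<open>[0,1]\<close> by continuity of \<open>u\<^sub>i\<close>.
\<close>

lemma Cm_imp_continuous_on:
  assumes "Cm m w" "m \<ge> 1"
  shows "continuous_on {0..1} w"
proof -
  have "\<forall>t\<in>{0..1}. (w has_vector_derivative dern 1 w t) (at t within {0..1})"
    using assms unfolding Cm_def by (metis One_nat_def dern.simps(1) less_one order_less_le_trans zero_less_one)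
  then show ?thesis
    using has_vector_derivative_continuous continuous_on_eq_continuous_within by blast
qed

lemma abs_le_supn:
  assumes "continuous_on {0..1} w" "t \<in> {0..1}"
  shows "\<bar>w t\<bar> \<le> supn w"
proof -
  have "bounded ((\<lambda>t. \<bar>w t\<bar>) ` {0..1})"
    by (intro compact_imp_bounded compact_continuous_image continuous_intros assms(1)) simp
  then have "bdd_above ((\<lambda>t. \<bar>w t\<bar>) ` {0..1})"
    by (rule bounded_imp_bdd_above)
  then show ?thesis
    unfolding supn_def using assms(2) by (rule cSUP_upper2) auto
qed

lemma le_supn_if_Cm:
  assumes "Cm m w" "m \<ge> 1" "t \<in> {0..1}"
  shows "w t \<le> supn w"
  using abs_le_supn[OF Cm_imp_continuous_on[OF assms(1,2)] assms(3)] by linarith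

lemma supn_le:
  assumes "\<forall>t\<in>{0..1}. \<bar>w t\<bar> \<le> B"
  shows "supn w \<le> B"
  unfolding supn_def using assms by (intro cSUP_least) auto

lemma AE_lborel_ex_in_Ioo:
  assumes "AE t in lborel. P t" "a < (b::real)"
  shows "\<exists>t\<in>{a<..<b}. P t"
proof (rule ccontr)
  assume "\<not> (\<exists>t\<in>{a<..<b}. P t)"
  then have "{a<..<b} \<subseteq> {t \<in> space lborel. \<not> P t}" by auto
  moreover obtain N where "{t \<in> space lborel. \<not> P t} \<subseteq> N" "emeasure lborel N = 0" "N \<in> sets lborel"
    using assms(1) by (rule AE_E)
  ultimately have "emeasure lborel {a<..<b} \<le> 0"
    by (metis emeasure_mono order_trans)
  then show False using assms(2) by simp
qed

lemma continuous_on_le_if_AE_le: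
  fixes w :: "real \<Rightarrow> real"
  assumes "continuous_on {a..b} w" "a < b" "AE t in lborel. t \<in> {a..b} \<longrightarrow> w t \<le> B"
  shows "\<forall>t\<in>{a..b}. w t \<le> B"
proof (rule ccontr)
  assume "\<not> (\<forall>t\<in>{a..b}. w t \<le> B)"
  then obtain t\<^sub>1 where t\<^sub>1: "t\<^sub>1 \<in> {a..b}" "w t\<^sub>1 > B" by auto
  then obtain d where "d > 0" and d: "\<forall>t\<in>{a..b}. dist t t\<^sub>1 < d \<longrightarrow> dist (w t) (w t\<^sub>1) < w t\<^sub>1 - B"
    using assms(1) unfolding continuous_on_iff by (meson diff_gt_0_iff_gt)
  \<comment> \<open>The bound fails on all of this nonempty open interval, which is not a null set.\<close>
  let ?I = "{max a (t\<^sub>1 - d)<..<min b (t\<^sub>1 + d)}"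
  have "max a (t\<^sub>1 - d) < min b (t\<^sub>1 + d)"
    using \<open>d > 0\<close> t\<^sub>1(1) assms(2) by auto
  then obtain t where t: "t \<in> ?I" "t \<in> {a..b} \<longrightarrow> w t \<le> B"
    using AE_lborel_ex_in_Ioo[OF assms(3)] by blast
  then have "t \<in> {a..b}" "dist t t\<^sub>1 < d"
    by (auto simp: dist_real_def)
  then show False
    using d t(2) by (auto simp: dist_real_def)
qed

lemma nonneg_eq_0_if_AE_le_contraction:
  assumes "continuous_on {0..1} w" "\<forall>t\<in>{0..1}. 0 \<le> w t" "c < 1"
    and "AE t in lborel. t \<in> {0..1} \<longrightarrow> w t \<le> c * supn w"
  shows "\<forall>t\<in>{0..1}. w t = 0"
proof -
  have "\<forall>t\<in>{0..1}. w t \<le> c * supn w"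
    using continuous_on_le_if_AE_le[OF assms(1) _ assms(4)] by simp
  then have "supn w \<le> c * supn w"
    using assms(2) by (intro supn_le) simp
  moreover have "0 \<le> supn w"
    using abs_le_supn[OF assms(1), of 0] by simp
  moreover have "c * supn w < supn w" if "0 < supn w"
    using mult_strict_right_mono[OF assms(3) that] by simp
  ultimately have "supn w = 0"
    by linarith
  then show ?thesis
    using abs_le_supn[OF assms(1)] assms(2) by (metis abs_of_nonneg order_antisym)
qed

lemma AE_section_measurable:
  fixes g :: "'a::euclidean_space \<times> 'b::euclidean_space \<Rightarrow> real"
  assumes "g \<in> borel_measurable lebesgue"
  shows "AE t in lborel. (\<lambda>s. g (t, s)) \<in> borel_measurable lebesgue"
proof -
  obtain g' where g': "g' \<in> borel_measurable lborel" "AE x in lborel. g x = g' x"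
    using completion_ex_borel_measurable_real[OF assms] by blast
  have "g' \<in> borel_measurable (lborel \<Otimes>\<^sub>M lborel)"
    using g'(1) by (simp only: lborel_prod)
  moreover have "AE t in lborel. AE s in lborel. g (t, s) = g' (t, s)"
    using g'(2) by (intro lborel_pair.AE_pair) (simp only: lborel_prod)
  \<comment> \<open>A Borel version of \<open>g\<close> has Borel sections, and almost every section of the null set
    where the two differ is null.\<close>
  ultimately show ?thesis
  proof (elim eventually_mono)
    fix t assume "g' \<in> borel_measurable (lborel \<Otimes>\<^sub>M lborel)"
      and ae: "AE s in lborel. g (t, s) = g' (t, s)"
    then have "(\<lambda>s. g' (t, s)) \<in> borel_measurable lborel"
      by measurable
    then have "(\<lambda>s. g' (t, s)) \<in> borel_measurable lebesgue"
      by (rule measurable_completion)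
    moreover have "AE s in lebesgue. g' (t, s) = g (t, s)"
      using AE_completion[OF ae] by auto
    ultimately show "(\<lambda>s. g (t, s)) \<in> borel_measurable lebesgue"
      by (rule borel_measurable_AE)
  qed
qed

lemma AE_section_measurable_on:
  fixes k :: "'a::euclidean_space \<Rightarrow> 'b::euclidean_space \<Rightarrow> real"
  assumes "set_borel_measurable lebesgue (A \<times> B) (\<lambda>(t, s). k t s)" "B \<in> sets lebesgue"
  shows "AE t in lborel. t \<in> A \<longrightarrow> (\<lambda>s. k t s) \<in> borel_measurable (lebesgue_on B)"
proof -
  have "AE t in lborel. (\<lambda>s. indicator (A \<times> B) (t, s) *\<^sub>R k t s) \<in> borel_measurable lebesgue"
    using AE_section_measurable[of "\<lambda>x. indicator (A \<times> B) x *\<^sub>R (case x of (t, s) \<Rightarrow> k t s)"] assms(1)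
    unfolding set_borel_measurable_def by simp
  then show ?thesis
  proof (rule eventually_mono, intro impI)
    fix t assume "t \<in> A" "(\<lambda>s. indicator (A \<times> B) (t, s) *\<^sub>R k t s) \<in> borel_measurable lebesgue"
    then have "(\<lambda>s. indicator B s *\<^sub>R k t s) \<in> borel_measurable lebesgue"
      by (simp add: indicator_def if_distrib cong: if_cong)
    then show "(\<lambda>s. k t s) \<in> borel_measurable (lebesgue_on B)"
      using assms(2) by (subst borel_measurable_restrict_space_iff) auto
  qed
qed

lemma sum_mult_le_sum_bounds:
  fixes a x y X Y :: "'a \<Rightarrow> real"
  assumes "\<forall>j\<in>J. 0 \<le> a j \<and> 0 \<le> x j \<and> x j \<le> X j \<and> 0 \<le> y j \<and> y j \<le> Y j * S"
  shows "(\<Sum>j\<in>J. a j * x j * y j) \<le> (\<Sum>j\<in>J. a j * Y j * X j) * S"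
  unfolding sum_distrib_right
proof (rule sum_mono)
  fix j assume "j \<in> J"
  then have "a j * (x j * y j) \<le> a j * (X j * (Y j * S))"
    using assms by (intro mult_left_mono mult_mono) auto
  then show "a j * x j * y j \<le> a j * Y j * X j * S"
    by (simp add: ac_simps)
qed

context
  fixes k :: "real \<Rightarrow> real \<Rightarrow> real" and \<Phi> :: "real \<Rightarrow> real"
  assumes kernel_nonneg: "\<forall>t\<in>{0..1}. \<forall>s\<in>{0..1}. 0 \<le> k t s"
    and majorant_integrable: "integrable (lebesgue_on {0..1}) \<Phi>"
    and kernel_le_majorant: "AE s in lebesgue_on {0..1}. \<forall>t\<in>{0..1}. k t s \<le> \<Phi> s"
begin

lemma integral_kernel_le_K0:
  assumes "t \<in> {0..1}"
  shows "integral\<^sup>L (lebesgue_on {0..1}) (k t) \<le> K0 k"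
proof -
  have "AE s in lebesgue_on {0..1}. 0 \<le> \<Phi> s"
    using kernel_le_majorant AE_space
  proof eventually_elim
    fix s assume "\<forall>t\<in>{0..1}. k t s \<le> \<Phi> s" "s \<in> space (lebesgue_on {0..1})"
    then have "0 \<le> k 0 s" "k 0 s \<le> \<Phi> s"
      using kernel_nonneg by (auto simp: space_restrict_space)
    then show "0 \<le> \<Phi> s"
      by linarith
  qed
  moreover have "AE s in lebesgue_on {0..1}. k t' s \<le> \<Phi> s" if "t' \<in> {0..1}" for t'
    using kernel_le_majorant by eventually_elim (use that in blast)
  ultimately have "integral\<^sup>L (lebesgue_on {0..1}) (k t') \<le> integral\<^sup>L (lebesgue_on {0..1}) \<Phi>"
    if "t' \<in> {0..1}" for t'
    using integral_mono_AE'[OF majorant_integrable] that by blast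
  then have "bdd_above ((\<lambda>t. integral\<^sup>L (lebesgue_on {0..1}) (k t)) ` {0..1})"
    by (intro bdd_aboveI2) auto
  then show ?thesis
    unfolding K0_def using assms by (rule cSUP_upper2) auto
qed

lemma integral_kernel_mult_le:
  assumes t: "t \<in> {0..1}" and section_measurable: "k t \<in> borel_measurable (lebesgue_on {0..1})"
    and F: "\<forall>s\<in>{0..1}. 0 \<le> F s \<and> F s \<le> M"
  shows "integral\<^sup>L (lebesgue_on {0..1}) (\<lambda>s. k t s * F s) \<le> M * K0 k"
proof -
  have "integrable (lebesgue_on {0..1}) (k t)"
    using majorant_integrable section_measurable
  proof (rule Bochner_Integration.integrable_bound)
    show "AE s in lebesgue_on {0..1}. norm (k t s) \<le> norm (\<Phi> s)"
      using kernel_le_majorant AE_space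
    proof eventually_elim
      fix s assume "\<forall>t\<in>{0..1}. k t s \<le> \<Phi> s" "s \<in> space (lebesgue_on {0..1})"
      then have "0 \<le> k t s" "k t s \<le> \<Phi> s"
        using kernel_nonneg t by (auto simp: space_restrict_space)
      then show "norm (k t s) \<le> norm (\<Phi> s)"
        by simp
    qed
  qed
  have "0 \<le> M" using F by fastforce
  \<comment> \<open>No measurability of \<open>F\<close> is needed: a non-integrable integrand has integral \<open>0\<close>.\<close>
  have "integral\<^sup>L (lebesgue_on {0..1}) (\<lambda>s. k t s * F s)
      \<le> integral\<^sup>L (lebesgue_on {0..1}) (\<lambda>s. M * k t s)"
    using \<open>integrable _ (k t)\<close> F kernel_nonneg t \<open>0 \<le> M\<close>
    by (intro integral_mono') (auto simp: mult.commute intro: mult_right_mono)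
  also have "\<dots> = M * integral\<^sup>L (lebesgue_on {0..1}) (k t)"
    by simp
  also have "\<dots> \<le> M * K0 k"
    using integral_kernel_le_K0[OF t] \<open>0 \<le> M\<close> by (rule mult_left_mono)
  finally show ?thesis .
qed

lemma AE_le_of_nonlocal_integral_equation:
  assumes jointly_measurable: "set_borel_measurable lebesgue ({0..1} \<times> {0..1}) (\<lambda>(t, s). k t s)"
    and F: "\<forall>s\<in>{0..1}. 0 \<le> F s \<and> F s \<le> \<tau> * S" and "0 \<le> lam"
    and nonlocal: "\<forall>t\<in>{0..1}. \<forall>j\<in>J. 0 \<le> \<eta> j \<and> 0 \<le> \<gamma> j t \<and> \<gamma> j t \<le> G j \<and> 0 \<le> H j \<and> H j \<le> \<xi> j * S"
    and w: "\<forall>t\<in>{0..1}. w t = lam * integral\<^sup>L (lebesgue_on {0..1}) (\<lambda>s. k t s * F s)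
                                + (\<Sum>j\<in>J. \<eta> j * \<gamma> j t * H j)"
  shows "AE t in lborel. t \<in> {0..1} \<longrightarrow> w t \<le> (lam * \<tau> * K0 k + (\<Sum>j\<in>J. \<eta> j * \<xi> j * G j)) * S"
proof -
  have "AE t in lborel. t \<in> {0..1} \<longrightarrow> k t \<in> borel_measurable (lebesgue_on {0..1})"
    using AE_section_measurable_on[OF jointly_measurable] by simp
  then show ?thesis
  proof (rule eventually_mono, intro impI)
    fix t assume t: "t \<in> {0..1}" and "t \<in> {0..1} \<longrightarrow> k t \<in> borel_measurable (lebesgue_on {0..1})"
    then have "integral\<^sup>L (lebesgue_on {0..1}) (\<lambda>s. k t s * F s) \<le> \<tau> * S * K0 k"
      using integral_kernel_mult_le[OF t _ F] by blast
    then have "lam * integral\<^sup>L (lebesgue_on {0..1}) (\<lambda>s. k t s * F s) \<le> lam * \<tau> * K0 k * S"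
      using mult_left_mono[OF _ \<open>0 \<le> lam\<close>] by (fastforce simp: ac_simps)
    moreover have "(\<Sum>j\<in>J. \<eta> j * \<gamma> j t * H j) \<le> (\<Sum>j\<in>J. \<eta> j * \<xi> j * G j) * S"
      using nonlocal t by (intro sum_mult_le_sum_bounds) blast
    ultimately show "w t \<le> (lam * \<tau> * K0 k + (\<Sum>j\<in>J. \<eta> j * \<xi> j * G j)) * S"
      using w t unfolding distrib_right by fastforce
  qed
qed

end

theorem theorem2p5:
  fixes n :: nat and m p :: "nat \<Rightarrow> nat"
    and k :: "nat \<Rightarrow> real \<Rightarrow> real \<Rightarrow> real"
    and \<Phi> :: "nat \<Rightarrow> nat \<Rightarrow> real \<Rightarrow> real"
    and f :: "nat \<Rightarrow> real \<Rightarrow> (nat \<Rightarrow> nat \<Rightarrow> real) \<Rightarrow> real"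
    and \<gamma> :: "nat \<Rightarrow> nat \<Rightarrow> real \<Rightarrow> real"
    and lam :: "nat \<Rightarrow> real" and \<eta> :: "nat \<Rightarrow> nat \<Rightarrow> real"
    and h :: "nat \<Rightarrow> nat \<Rightarrow> (nat \<Rightarrow> real \<Rightarrow> real) \<Rightarrow> real"
    and \<tau> :: "nat \<Rightarrow> real" and \<xi> :: "nat \<Rightarrow> nat \<Rightarrow> real"
    and u :: "nat \<Rightarrow> real \<Rightarrow> real"
  assumes n_pos: "n \<ge> 1"
    and m_pos: "\<forall>i<n. m i \<ge> 1"
    and p_pos: "\<forall>i<n. p i \<ge> 1"
    \<comment> \<open>(C1)\<close>
    and C1_meas: "\<forall>i<n. set_borel_measurable lebesgue ({0..1} \<times> {0..1}) (\<lambda>(t, s). k i t s)"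
    and C1_nonneg: "\<forall>i<n. \<forall>t\<in>{0..1}. \<forall>s\<in>{0..1}. k i t s \<ge> 0"
    and C1_int: "\<forall>i<n. integrable (lebesgue_on {0..1}) (\<Phi> i 0)"
    and C1_ae: "\<forall>i<n. AE s in lebesgue_on {0..1}.
                  continuous_on {0..1} (\<lambda>t. k i t s) \<and> (\<forall>t\<in>{0..1}. k i t s \<le> \<Phi> i 0 s)"
    \<comment> \<open>(C2), (C3)\<close>
    and C23_meas: "\<forall>i<n. \<forall>l\<in>{1..m i}.
                  set_borel_measurable lebesgue ({0..1} \<times> {0..1}) (\<lambda>(t, s). dern l (\<lambda>r. k i r s) t)"
    and C23_int: "\<forall>i<n. \<forall>l\<in>{1..m i}. integrable (lebesgue_on {0..1}) (\<Phi> i l)"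
    and C23_ae: "\<forall>i<n. AE s in lebesgue_on {0..1}.
        (\<forall>j. j + 1 < m i \<longrightarrow> (\<forall>t\<in>{0..1}.
            (dern j (\<lambda>r. k i r s) has_vector_derivative dern (Suc j) (\<lambda>r. k i r s) t) (at t within {0..1})))
      \<and> (\<forall>t\<in>{0..1} - {s}.
            (dern (m i - 1) (\<lambda>r. k i r s) has_vector_derivative dern (m i) (\<lambda>r. k i r s) t) (at t within {0..1}))
      \<and> (\<forall>l\<in>{1..<m i}. continuous_on {0..1} (dern l (\<lambda>r. k i r s))
            \<and> (\<forall>t\<in>{0..1}. \<bar>dern l (\<lambda>r. k i r s) t\<bar> \<le> \<Phi> i l s))
      \<and> continuous_on ({0..1} - {s}) (dern (m i) (\<lambda>r. k i r s))
      \<and> (0 < s \<longrightarrow> (\<exists>a. (dern (m i) (\<lambda>r. k i r s) \<longlongrightarrow> a) (at_left s)))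
      \<and> (s < 1 \<longrightarrow> (\<exists>b. (dern (m i) (\<lambda>r. k i r s) \<longlongrightarrow> b) (at_right s)))
      \<and> (\<forall>t\<in>{0..1} - {s}. \<bar>dern (m i) (\<lambda>r. k i r s) t\<bar> \<le> \<Phi> i (m i) s)"
    \<comment> \<open>(C4)\<close>
    and C4_local: "\<forall>i<n. \<forall>t x y. (\<forall>q<n. \<forall>j\<le>m q. x q j = y q j) \<longrightarrow> f i t x = f i t y"
    and C4_nonneg: "\<forall>i<n. \<forall>t\<in>{0..1}. \<forall>x. (\<forall>q<n. x q 0 \<ge> 0) \<longrightarrow> f i t x \<ge> 0"
    and C4_cont: "\<forall>i<n. \<forall>t\<in>{0..1}. \<forall>x. (\<forall>q<n. x q 0 \<ge> 0) \<longrightarrow>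
        (\<forall>\<epsilon>>0. \<exists>\<delta>>0. \<forall>t'\<in>{0..1}. \<forall>x'. (\<forall>q<n. x' q 0 \<ge> 0) \<longrightarrow>
            \<bar>t' - t\<bar> < \<delta> \<longrightarrow> (\<forall>q<n. \<forall>j\<le>m q. \<bar>x' q j - x q j\<bar> < \<delta>) \<longrightarrow>
            \<bar>f i t' x' - f i t x\<bar> < \<epsilon>)"
    \<comment> \<open>(C5), (C6)\<close>
    and C5: "\<forall>i<n. \<forall>j<p i. Cm (m i) (\<gamma> i j) \<and> (\<forall>t\<in>{0..1}. \<gamma> i j t \<ge> 0)"
    and C6: "\<forall>i<n. lam i \<ge> 0 \<and> (\<forall>j<p i. \<eta> i j \<ge> 0)"
    \<comment> \<open>(C7)\<close>
    and C7: "\<forall>i<n. spectral_radiusC01 (k i) > 0"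
    \<comment> \<open>(C8)\<close>
    and C8_nonneg: "\<forall>i<n. \<forall>j<p i. \<forall>v\<in>coneP n m. h i j v \<ge> 0"
    and C8_cont: "\<forall>i<n. \<forall>j<p i. \<forall>v\<in>coneP n m. \<forall>\<epsilon>>0. \<exists>\<delta>>0. \<forall>w\<in>coneP n m.
        normP n m (\<lambda>q r. w q r - v q r) < \<delta> \<longrightarrow> \<bar>h i j w - h i j v\<bar> < \<epsilon>"
    and C8_bdd: "\<forall>i<n. \<forall>j<p i. \<forall>R. \<exists>B. \<forall>v\<in>coneP n m. normP n m v \<le> R \<longrightarrow> \<bar>h i j v\<bar> \<le> B"
    \<comment> \<open>growth conditions\<close>
    and tau_pos: "\<forall>i<n. \<tau> i > 0"
    and xi_pos: "\<forall>i<n. \<forall>j<p i. \<xi> i j > 0"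
    and f_growth: "\<forall>i<n. \<forall>t\<in>{0..1}. \<forall>x. (\<forall>q<n. x q 0 \<ge> 0) \<longrightarrow> f i t x \<le> \<tau> i * x i 0"
    and h_growth: "\<forall>i<n. \<forall>j<p i. \<forall>v\<in>coneP n m. h i j v \<le> \<xi> i j * supn (v i)"
    and small: "Max ((\<lambda>i. lam i * \<tau> i * K0 (k i)
                   + (\<Sum>j<p i. \<eta> i j * \<xi> i j * supn (\<gamma> i j))) ` {..<n}) < 1"
    \<comment> \<open>u is a solution in P\<close>
    and u_in: "u \<in> coneP n m"
    and u_sol: "\<forall>i<n. \<forall>t\<in>{0..1}. u i t =
        lam i * integral\<^sup>L (lebesgue_on {0..1}) (\<lambda>s. k i t s * f i s (\<lambda>q j. dern j (u q) s))
        + (\<Sum>j<p i. \<eta> i j * \<gamma> i j t * h i j u)"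
  shows "\<forall>i<n. \<forall>t\<in>{0..1}. u i t = 0"
proof (intro allI impI)
  fix i assume i: "i < n"
  define S where "S = supn (u i)"
  have u_nonneg: "\<forall>q<n. \<forall>s\<in>{0..1}. 0 \<le> u q s" and u_Cm: "Cm (m i) (u i)"
    using u_in i unfolding coneP_def by auto
  have f_bound: "\<forall>s\<in>{0..1}. 0 \<le> f i s (\<lambda>q j. dern j (u q) s) \<and> f i s (\<lambda>q j. dern j (u q) s) \<le> \<tau> i * S"
  proof
    fix s :: real assume s: "s \<in> {0..1}"
    have args_nonneg: "\<forall>q<n. 0 \<le> dern 0 (u q) s"
      using u_nonneg s by simp
    have "\<tau> i * u i s \<le> \<tau> i * S"
      using le_supn_if_Cm[OF u_Cm _ s] m_pos tau_pos i unfolding S_def by (simp add: mult_left_mono)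
    then show "0 \<le> f i s (\<lambda>q j. dern j (u q) s) \<and> f i s (\<lambda>q j. dern j (u q) s) \<le> \<tau> i * S"
      using C4_nonneg[rule_format, of i s "\<lambda>q j. dern j (u q) s"]
        f_growth[rule_format, of i s "\<lambda>q j. dern j (u q) s"] i s args_nonneg by simp
  qed
  have "\<forall>t\<in>{0..1}. \<forall>j\<in>{..<p i}. 0 \<le> \<eta> i j \<and> 0 \<le> \<gamma> i j t \<and> \<gamma> i j t \<le> supn (\<gamma> i j)
      \<and> 0 \<le> h i j u \<and> h i j u \<le> \<xi> i j * S"
    using C5 C6 C8_nonneg h_growth u_in i m_pos unfolding S_def by (auto intro: le_supn_if_Cm[of "m i"])
  then have "AE t in lborel. t \<in> {0..1} \<longrightarrow> u i t
      \<le> (lam i * \<tau> i * K0 (k i) + (\<Sum>j<p i. \<eta> i j * \<xi> i j * supn (\<gamma> i j))) * S"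
    using C1_nonneg C1_int C1_ae C1_meas C6 u_sol i f_bound
    by (intro AE_le_of_nonlocal_integral_equation[where \<Phi> = "\<Phi> i 0"]) (auto elim: eventually_mono)
  moreover have "lam i * \<tau> i * K0 (k i) + (\<Sum>j<p i. \<eta> i j * \<xi> i j * supn (\<gamma> i j)) < 1"
    using small i by (meson Max_ge finite_imageI finite_lessThan imageI lessThan_iff le_less_trans)
  ultimately show "\<forall>t\<in>{0..1}. u i t = 0"
    using nonneg_eq_0_if_AE_le_contraction Cm_imp_continuous_on[OF u_Cm] u_nonneg m_pos i
    unfolding S_def by blast
qed

end
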